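(* Let $\epsilon_1<\epsilon_2$ with $[\epsilon_1,\epsilon_2]\subseteq\operatorname{int}(\mathcal{E})$. If the primal optimal set $\mathcal{P}^*(\epsilon)$ is the same set for all $\epsilon\in[\epsilon_1,\epsilon_2]$ and $\operatorname{rank}(S^*(\epsilon))$ is constant on $[\epsilon_1,\epsilon_2]$ (where $(X^*(\epsilon),y^*(\epsilon),S^*(\epsilon))$ is a maximally complementary optimal solution), then the optimal partition $\pi(\epsilon)$ is constant on $[\epsilon_1,\epsilon_2]$.
   Context: Let $\mathbb{S}^n$ be the real symmetric $n\times n$ matrices, $\langle C,X\rangle=\operatorname{trace}(CX)$, $\succeq0$ positive semidefinite, $\succ0$ positive definite. Fix $C,\bar C,A^1,\dots,A^m\in\mathbb{S}^n$, $b\in\mathbb{R}^m$; $(P_\epsilon)$: $\inf\{\langle C+\epsilon\bar C,X\rangle:\langle A^i,X\rangle=b_i,\ X\succeq0\}$; $(D_\epsilon)$: $\sup\{b^Ty:\sum_iy_iA^i+S=C+\epsilon\bar C,\ S\succeq0\}$; $v(\epsilon)$ the optimal value of $(P_\epsilon)$, $\mathcal{E}=\{\epsilon:v(\epsilon)>-\infty\}$. Standing assumptions: the $A^i$ are linearly independent and there exist $X\succ0$ feasible for $(P_0)$ and $(y,S)$ with $S\succ0$ feasible for $(D_0)$; then for every $\epsilon\in\operatorname{int}(\mathcal{E})$ strong duality holds and the optimal sets $\mathcal{P}^*(\epsilon)$ (of $(P_\epsilon)$) and $\mathcal{D}^*(\epsilon)$ (of $(D_\epsilon)$) are nonempty and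 compact. An optimal solution $(X^*(\epsilon),y^*(\epsilon),S^*(\epsilon))$ is maximally complementary if $X^*(\epsilon)\in\operatorname{ri}\mathcal{P}^*(\epsilon)$ and $(y^*(\epsilon),S^*(\epsilon))\in\operatorname{ri}\mathcal{D}^*(\epsilon)$ ($\operatorname{ri}$ = relative interior); such solutions exist for $\epsilon\in\operatorname{int}(\mathcal{E})$ and their ranks are maximal over the optimal set. The optimal partition is $\pi(\epsilon)=(\mathcal{B}(\epsilon),\mathcal{T}(\epsilon),\mathcal{N}(\epsilon))$ with $\mathcal{B}(\epsilon)=\mathcal{R}(X^*(\epsilon))$, $\mathcal{N}(\epsilon)=\mathcal{R}(S^*(\epsilon))$ (column spaces), $\mathcal{T}(\epsilon)=(\mathcal{B}(\epsilon)+\mathcal{N}(\epsilon))^\perp$; it does not depend on the choice of maximally complementary solution. *)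

theory Defs
  imports "HOL-Analysis.Analysis"
begin

definition sym_mat :: "real^'n^'n \<Rightarrow> bool" where
  "sym_mat X \<longleftrightarrow> transpose X = X"

definition psd :: "real^'n^'n \<Rightarrow> bool" where
  "psd X \<longleftrightarrow> sym_mat X \<and> (\<forall>x. 0 \<le> x \<bullet> (X *v x))"

definition pd :: "real^'n^'n \<Rightarrow> bool" where
  "pd X \<longleftrightarrow> sym_mat X \<and> (\<forall>x. x \<noteq> 0 \<longrightarrow> 0 < x \<bullet> (X *v x))"

definition trip :: "real^'n^'n \<Rightarrow> real^'n^'n \<Rightarrow> real" where
  "trip C X = trace (C ** X)"

definition primal_feas :: "('m::finite \<Rightarrow> real^'n^'n) \<Rightarrow> real^'m \<Rightarrow> real^'n^'n \<Rightarrow> bool" where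
  "primal_feas A b X \<longleftrightarrow> psd X \<and> (\<forall>i. trip (A i) X = b $ i)"

definition dual_feas :: "real^'n^'n \<Rightarrow> real^'n^'n \<Rightarrow> ('m::finite \<Rightarrow> real^'n^'n) \<Rightarrow> real
     \<Rightarrow> (real^'m) \<times> (real^'n^'n) \<Rightarrow> bool" where
  "dual_feas C Cb A eps yS \<longleftrightarrow>
     (\<Sum>i\<in>UNIV. (fst yS $ i) *\<^sub>R A i) + snd yS = C + eps *\<^sub>R Cb \<and> psd (snd yS)"

text \<open>The set E of parameters with finite optimal value v(eps) > -infinity
  (the primal feasible set is nonempty under the standing assumptions,
  so this means the objective is bounded below on the feasible set).\<close>
definition Eset :: "real^'n^'n \<Rightarrow> real^'n^'n \<Rightarrow> ('m::finite \<Rightarrow> real^'n^'n) \<Rightarrow> real^'m \<Rightarrow> real set" where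
  "Eset C Cb A b = {eps. \<exists>l. \<forall>X. primal_feas A b X \<longrightarrow> l \<le> trip (C + eps *\<^sub>R Cb) X}"

definition Popt :: "real^'n^'n \<Rightarrow> real^'n^'n \<Rightarrow> ('m::finite \<Rightarrow> real^'n^'n) \<Rightarrow> real^'m \<Rightarrow> real
     \<Rightarrow> (real^'n^'n) set" where
  "Popt C Cb A b eps = {X. primal_feas A b X \<and>
     (\<forall>X'. primal_feas A b X' \<longrightarrow> trip (C + eps *\<^sub>R Cb) X \<le> trip (C + eps *\<^sub>R Cb) X')}"

definition Dopt :: "real^'n^'n \<Rightarrow> real^'n^'n \<Rightarrow> ('m::finite \<Rightarrow> real^'n^'n) \<Rightarrow> real^'m \<Rightarrow> real
     \<Rightarrow> ((real^'m) \<times> (real^'n^'n)) set" where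
  "Dopt C Cb A b eps = {yS. dual_feas C Cb A eps yS \<and>
     (\<forall>yS'. dual_feas C Cb A eps yS' \<longrightarrow> b \<bullet> fst yS' \<le> b \<bullet> fst yS)}"

definition max_compl :: "real^'n^'n \<Rightarrow> real^'n^'n \<Rightarrow> ('m::finite \<Rightarrow> real^'n^'n) \<Rightarrow> real^'m \<Rightarrow> real
     \<Rightarrow> real^'n^'n \<Rightarrow> real^'m \<Rightarrow> real^'n^'n \<Rightarrow> bool" where
  "max_compl C Cb A b eps X y S \<longleftrightarrow>
     X \<in> rel_interior (Popt C Cb A b eps) \<and> (y, S) \<in> rel_interior (Dopt C Cb A b eps)"

definition opt_partition :: "real^'n^'n \<Rightarrow> real^'n^'n
     \<Rightarrow> (real^'n) set \<times> (real^'n) set \<times> (real^'n) set" where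
  "opt_partition X S =
     (range (\<lambda>x. X *v x),
      orthogonal_comp {u + w | u w. u \<in> range (\<lambda>x. X *v x) \<and> w \<in> range (\<lambda>x. S *v x)},
      range (\<lambda>x. S *v x))"

end

theory Submission
  imports Defs
begin

text \<open>
  Pick \<open>X\<^sub>o\<close> in the common primal optimal set. It is optimal for every \<open>\<epsilon>\<close> in the interval,
  so the optimal value \<open>\<langle>C + \<epsilon>C\<^sub>b, X\<^sub>o\<rangle>\<close> is affine in \<open>\<epsilon>\<close>; together with strong duality this
  makes every convex combination of dual optimal solutions at the two end points dual
  optimal at the corresponding intermediate parameter. A relative interior point of a set of
  semidefinite matrices has the largest column space, so the column space of \<open>S\<^sup>*(\<epsilon>)\<close>
  contains those of \<open>S\<^sup>*(\<epsilon>\<^sub>1)\<close> and \<open>S\<^sup>*(\<epsilon>\<^sub>2)\<close>, and equality of ranks turns these inclusions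
  into equalities. The same relative-interior argument applied to the common primal optimal
  set shows that the column space of \<open>X\<^sup>*(\<epsilon>)\<close> does not move either.
\<close>

abbreviation colspace :: "real^'n^'m \<Rightarrow> (real^'m) set" where
  "colspace M \<equiv> range (\<lambda>x. M *v x)"

section \<open>Symmetric and positive semidefinite matrices\<close>

lemma inner_matrix_vector_eq_sum:
  "(x::real^'n) \<bullet> (M *v y) = (\<Sum>i\<in>UNIV. \<Sum>j\<in>UNIV. x$i * M$i$j * y$j)"
  by (simp add: inner_vec_def matrix_vector_mult_def sum_distrib_left mult.assoc)

lemma sym_mat_entry_swap: "sym_mat M \<Longrightarrow> M$i$j = M$j$i"
  unfolding sym_mat_def by (metis transpose_def vec_lambda_beta)

lemma sym_mat_inner_commute:
  assumes "sym_mat (M::real^'n^'n)"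
  shows "x \<bullet> (M *v y) = (M *v x) \<bullet> y"
proof -
  have "(M *v x) \<bullet> y = (\<Sum>i\<in>UNIV. \<Sum>j\<in>UNIV. y$i * M$i$j * x$j)"
    by (simp add: inner_commute inner_matrix_vector_eq_sum)
  also have "\<dots> = (\<Sum>j\<in>UNIV. \<Sum>i\<in>UNIV. x$j * M$j$i * y$i)"
    using sym_mat_entry_swap[OF assms] by (subst sum.swap) (simp add: mult_ac)
  finally show ?thesis by (simp add: inner_matrix_vector_eq_sum)
qed

lemma sym_mat_add: "sym_mat P \<Longrightarrow> sym_mat Q \<Longrightarrow> sym_mat (P + Q)"
  unfolding sym_mat_def by (simp add: transpose_def vec_eq_iff)

lemma sym_mat_diff: "sym_mat P \<Longrightarrow> sym_mat Q \<Longrightarrow> sym_mat (P - Q)"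
  unfolding sym_mat_def by (simp add: transpose_def vec_eq_iff)

lemma sym_mat_scaleR: "sym_mat P \<Longrightarrow> sym_mat (c *\<^sub>R P)"
  unfolding sym_mat_def by (simp add: transpose_scalar)

lemma sym_mat_sum_scaleR:
  "(\<And>i. sym_mat (A i)) \<Longrightarrow> sym_mat (\<Sum>i\<in>I. (c $ i) *\<^sub>R (A i :: real^'n^'n))"
  by (induct I rule: infinite_finite_induct)
     (simp_all add: sym_mat_add sym_mat_scaleR sym_mat_def transpose_def vec_eq_iff)

lemma nonneg_quadratic_discriminant:
  fixes a b c :: real
  assumes nonneg: "\<And>t. 0 \<le> a + 2*t*b + t^2*c" and "0 \<le> c"
  shows "b^2 \<le> a*c"
proof (cases "c = 0")
  case False
  then have "0 < c" using \<open>0 \<le> c\<close> by simp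
  have "0 \<le> c * (a + 2*(-b/c)*b + (-b/c)^2*c)" using nonneg[of "-b/c"] \<open>0 < c\<close> by simp
  also have "\<dots> = a*c - b^2" using \<open>0 < c\<close> by (simp add: field_simps power2_eq_square)
  finally show ?thesis by simp
next
  case True
  have "b = 0"
  proof (rule ccontr)
    assume "b \<noteq> 0"
    then show False using nonneg[of "-(a+1)/(2*b)"] True by (simp add: field_simps)
  qed
  with True show ?thesis by simp
qed

lemma psd_sym_mat: "psd X \<Longrightarrow> sym_mat X"
  by (simp add: psd_def)

lemma psd_quadratic_nonneg: "psd X \<Longrightarrow> 0 \<le> x \<bullet> (X *v x)"
  by (simp add: psd_def)

lemma psd_zero: "psd 0"
  by (simp add: psd_def sym_mat_def transpose_def vec_eq_iff)

lemma psd_add: "psd P \<Longrightarrow> psd Q \<Longrightarrow> psd (P + Q)"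
  by (simp add: psd_def sym_mat_add matrix_vector_mult_add_rdistrib inner_add_right
      add_nonneg_nonneg)

lemma psd_scaleR: "psd P \<Longrightarrow> 0 \<le> c \<Longrightarrow> psd (c *\<^sub>R P)"
  by (auto simp: psd_def sym_mat_scaleR scaleR_matrix_vector_assoc[symmetric])

lemma pd_imp_psd: "pd S \<Longrightarrow> psd S"
  unfolding pd_def psd_def by (metis inner_zero_left order.refl less_imp_le)

lemma psd_cauchy_schwarz:
  assumes P: "psd (P::real^'n^'n)"
  shows "(w \<bullet> (P *v z))^2 \<le> (w \<bullet> (P *v w)) * (z \<bullet> (P *v z))"
proof (rule nonneg_quadratic_discriminant)
  fix t
  have "z \<bullet> (P *v w) = w \<bullet> (P *v z)"
    using sym_mat_inner_commute[OF psd_sym_mat[OF P], of z w] by (simp add: inner_commute)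
  then have "(w + t *\<^sub>R z) \<bullet> (P *v (w + t *\<^sub>R z))
      = w \<bullet> (P *v w) + 2*t*(w \<bullet> (P *v z)) + t^2*(z \<bullet> (P *v z))"
    by (simp add: matrix_vector_right_distrib matrix_vector_mult_scaleR inner_add_left
        inner_add_right algebra_simps power2_eq_square)
  then show "0 \<le> w \<bullet> (P *v w) + 2*t*(w \<bullet> (P *v z)) + t^2*(z \<bullet> (P *v z))"
    using psd_quadratic_nonneg[OF P] by metis
qed (use psd_quadratic_nonneg[OF P] in simp)

lemma psd_quadratic_zero_imp_kernel:
  assumes P: "psd (P::real^'n^'n)" and z: "z \<bullet> (P *v z) = 0"
  shows "P *v z = 0"
proof -
  have "((P *v z) \<bullet> (P *v z))^2 \<le> ((P *v z) \<bullet> (P *v (P *v z))) * (z \<bullet> (P *v z))"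
    by (rule psd_cauchy_schwarz[OF P])
  with z show ?thesis by simp
qed

section \<open>Column spaces\<close>

lemma subspace_colspace: "subspace (colspace M)"
  using linear_subspace_image[OF matrix_vector_mul_linear[of M] subspace_UNIV] by simp

lemma span_colspace: "span (colspace M) = colspace M"
  using subspace_colspace by (rule span_eq_iff[THEN iffD2])

lemma sym_mat_in_colspace:
  fixes M :: "real^'n^'n"
  assumes sym: "sym_mat M" and orth: "\<And>z. M *v z = 0 \<Longrightarrow> x \<bullet> z = 0"
  shows "x \<in> colspace M"
proof -
  obtain y z where y: "y \<in> colspace M" and z: "\<And>w. w \<in> colspace M \<Longrightarrow> orthogonal z w"
    and xyz: "x = y + z"
    using orthogonal_subspace_decomp_exists[of "colspace M" x] by (auto simp: span_colspace)
  have "(M *v z) \<bullet> (M *v z) = 0"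
    using z[of "M *v (M *v z)"] sym_mat_inner_commute[OF sym] by (auto simp: orthogonal_def)
  then have "x \<bullet> z = 0" by (simp add: orth)
  moreover have "y \<bullet> z = 0" using z[OF y] by (simp add: orthogonal_def inner_commute)
  ultimately have "z = 0" using xyz by (simp add: inner_add_left)
  then show ?thesis using xyz y by simp
qed

lemma colspace_subset_psd_add:
  fixes P Q :: "real^'n^'n"
  assumes P: "psd P" and Q: "psd Q"
  shows "colspace P \<subseteq> colspace (P + Q)"
proof
  fix x assume "x \<in> colspace P"
  then obtain v where v: "x = P *v v" by auto
  show "x \<in> colspace (P + Q)"
  proof (rule sym_mat_in_colspace)
    show "sym_mat (P + Q)" using P Q by (simp add: psd_add psd_sym_mat)
  next
    fix z assume "(P + Q) *v z = 0"
    then have "z \<bullet> (P *v z) + z \<bullet> (Q *v z) = 0"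
      by (metis inner_add_right inner_zero_right matrix_vector_mult_add_rdistrib)
    then have "z \<bullet> (P *v z) = 0"
      using psd_quadratic_nonneg[OF P, of z] psd_quadratic_nonneg[OF Q, of z] by linarith
    then have "P *v z = 0" using P psd_quadratic_zero_imp_kernel by blast
    then show "x \<bullet> z = 0"
      using v sym_mat_inner_commute[OF psd_sym_mat[OF P], of v z] by (simp add: inner_commute)
  qed
qed

lemma colspace_scaleR:
  assumes "c \<noteq> 0"
  shows "colspace (c *\<^sub>R (P::real^'n^'m)) = colspace P"
proof -
  have "(c *\<^sub>R P) *v x = P *v (c *\<^sub>R x)" "P *v x = (c *\<^sub>R P) *v ((1/c) *\<^sub>R x)" for x
    using assms by (simp_all add: scaleR_matrix_vector_assoc[symmetric] matrix_vector_mult_scaleR)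
  then show ?thesis
    by (metis (no_types, lifting) image_cong range_composition rangeI subset_antisym image_subsetI)
qed

lemma colspace_subset_psd_combination:
  fixes P Q :: "real^'n^'n"
  assumes "psd P" "psd Q" "0 < a" "0 \<le> b"
  shows "colspace P \<subseteq> colspace (a *\<^sub>R P + b *\<^sub>R Q)"
  using colspace_subset_psd_add[OF psd_scaleR psd_scaleR] colspace_scaleR[of a P] assms
  by (metis less_eq_real_def less_irrefl)

lemma colspace_eq_if_subset_rank_eq:
  fixes S T :: "real^'n^'m"
  assumes "colspace S \<subseteq> colspace T" and "rank S = rank T"
  shows "colspace S = colspace T"
  using subspace_dim_equal[OF subspace_colspace subspace_colspace assms(1)] assms(2)
  by (simp add: rank_dim_range)

section \<open>Column spaces over relative interiors\<close>

lemma rel_interior_extend_segment: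
  fixes S :: "'a::euclidean_space set"
  assumes x: "x \<in> rel_interior S" and "y \<in> S"
  obtains z u where "z \<in> S" "0 < u" "u < 1" "x = (1 - u) *\<^sub>R z + u *\<^sub>R y"
proof -
  obtain r where "r > 0" and "x \<in> S" and ball: "cball x r \<inter> affine hull S \<subseteq> S"
    using x mem_rel_interior_cball by blast
  define s where "s = r / (norm (x - y) + 1)"
  have "s > 0" using \<open>r > 0\<close> by (simp add: s_def add_nonneg_pos)
  define z where "z = (1 + s) *\<^sub>R x + (- s) *\<^sub>R y"
  have "z \<in> affine hull S"
    unfolding z_def using \<open>x \<in> S\<close> \<open>y \<in> S\<close>
    by (intro mem_affine[OF affine_affine_hull hull_inc hull_inc]) auto
  moreover have "dist x z \<le> r"
  proof -
    have "dist x z = s * norm (x - y)"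
    proof -
      have "x - z = s *\<^sub>R (y - x)" by (simp add: z_def algebra_simps)
      then show ?thesis using \<open>s > 0\<close> by (simp add: dist_norm norm_minus_commute)
    qed
    also have "\<dots> \<le> r"
      using \<open>r > 0\<close> by (simp add: s_def divide_le_eq add_nonneg_pos)
    finally show ?thesis .
  qed
  ultimately have "z \<in> S" using ball by auto
  moreover have "x = (1 - s / (1 + s)) *\<^sub>R z + (s / (1 + s)) *\<^sub>R y"
  proof -
    have "1 - s / (1 + s) = 1 / (1 + s)" using \<open>s > 0\<close> by (simp add: field_simps)
    moreover have "(1 / (1 + s)) *\<^sub>R z = x - (s / (1 + s)) *\<^sub>R y"
      using \<open>s > 0\<close> by (simp add: z_def scaleR_diff_right)
    ultimately show ?thesis by simp
  qed
  moreover have "0 < s / (1 + s)" "s / (1 + s) < 1" using \<open>s > 0\<close> by simp_all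
  ultimately show ?thesis using that by blast
qed

lemma colspace_subset_rel_interior:
  fixes f :: "'a::euclidean_space \<Rightarrow> real^'n^'n"
  assumes "linear f" and psd: "\<And>z. z \<in> D \<Longrightarrow> psd (f z)" and "x \<in> rel_interior D" and "y \<in> D"
  shows "colspace (f y) \<subseteq> colspace (f x)"
proof -
  obtain z u where "z \<in> D" "0 < u" "u < 1" and x: "x = (1 - u) *\<^sub>R z + u *\<^sub>R y"
    using rel_interior_extend_segment[OF \<open>x \<in> rel_interior D\<close> \<open>y \<in> D\<close>] .
  have "f x = u *\<^sub>R f y + (1 - u) *\<^sub>R f z"
    using \<open>linear f\<close> by (simp add: x linear_add linear_scale add.commute)
  then show ?thesis
    using colspace_subset_psd_combination[OF psd[OF \<open>y \<in> D\<close>] psd[OF \<open>z \<in> D\<close>]] \<open>0 < u\<close> \<open>u < 1\<close>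
    by simp
qed

lemma colspace_eq_rel_interior_psd:
  assumes "\<And>X. X \<in> D \<Longrightarrow> psd X" and "X1 \<in> rel_interior D" "X2 \<in> rel_interior D"
  shows "colspace X1 = colspace (X2::real^'n^'n)"
proof -
  have "colspace X \<subseteq> colspace Y" if "X \<in> rel_interior D" "Y \<in> rel_interior D" for X Y
    using colspace_subset_rel_interior[of id D Y X] assms(1) that rel_interior_subset linear_id
    by auto
  then show ?thesis using assms by blast
qed

section \<open>The trace inner product\<close>

lemma trip_eq_sum: "trip C X = (\<Sum>i\<in>UNIV. \<Sum>k\<in>UNIV. C$i$k * X$k$i)"
  by (simp add: trip_def trace_def matrix_matrix_mult_def)

lemma trip_add_left: "trip (C + D) X = trip C X + trip D X"
  by (simp add: trip_eq_sum distrib_right sum.distrib)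

lemma trip_scaleR_left: "trip (c *\<^sub>R C) X = c * trip C X"
  by (simp add: trip_eq_sum sum_distrib_left mult.assoc)

lemma trip_add_right: "trip C (X + Y) = trip C X + trip C Y"
  by (simp add: trip_eq_sum distrib_left sum.distrib)

lemma trip_scaleR_right: "trip C (c *\<^sub>R X) = c * trip C X"
  by (simp add: trip_eq_sum sum_distrib_left mult.left_commute)

lemma trip_zero_right [simp]: "trip C 0 = 0"
  by (simp add: trip_eq_sum)

lemma trip_zero_left [simp]: "trip 0 X = 0"
  by (simp add: trip_eq_sum)

lemma trip_sum_scaleR_left:
  "finite I \<Longrightarrow> trip (\<Sum>i\<in>I. c i *\<^sub>R A i) X = (\<Sum>i\<in>I. c i * trip (A i) X)"
  by (induct rule: finite_induct) (simp_all add: trip_add_left trip_scaleR_left)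

lemma trip_commute: "trip C X = trip X C"
  unfolding trip_def by (rule trace_mul_sym)

definition outer_prod :: "real^'n \<Rightarrow> real^'n^'n" where
  "outer_prod u = (\<chi> i j. u$i * u$j)"

lemma outer_prod_mult_vector: "outer_prod u *v w = (u \<bullet> w) *\<^sub>R u"
  by (simp add: outer_prod_def matrix_vector_mult_def inner_vec_def vec_eq_iff
      sum_distrib_left sum_distrib_right mult_ac)

lemma trip_outer_prod: "trip S (outer_prod u) = u \<bullet> (S *v u)"
  by (simp add: trip_eq_sum outer_prod_def inner_matrix_vector_eq_sum mult_ac)

lemma psd_outer_prod: "psd (outer_prod u)"
proof -
  have "sym_mat (outer_prod u)"
    by (simp add: sym_mat_def outer_prod_def transpose_def vec_eq_iff mult.commute)
  moreover have "x \<bullet> (outer_prod u *v x) = (u \<bullet> x)^2" for x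
    by (simp add: outer_prod_mult_vector power2_eq_square inner_commute)
  ultimately show ?thesis by (simp add: psd_def)
qed

text \<open>Cauchy-Schwarz for the form of \<open>X\<close> gives \<open>(w\<^sup>TXz)\<^sup>2 \<le> (w\<^sup>TXw)(z\<^sup>TXz)\<close>.\<close>
lemma psd_diff_outer_prod:
  assumes X: "psd X" and "0 < z \<bullet> (X *v z)"
  shows "psd (X - (1 / (z \<bullet> (X *v z))) *\<^sub>R outer_prod (X *v z))"
    (is "psd (X - ?c *\<^sub>R outer_prod ?u)")
proof -
  have "0 \<le> w \<bullet> ((X - ?c *\<^sub>R outer_prod ?u) *v w)" for w
  proof -
    have "(w \<bullet> ?u)^2 \<le> (w \<bullet> (X *v w)) / ?c"
      using psd_cauchy_schwarz[OF X, of w z] \<open>0 < z \<bullet> (X *v z)\<close> by simp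
    then show ?thesis
      using \<open>0 < z \<bullet> (X *v z)\<close>
      by (simp add: matrix_vector_mult_diff_rdistrib outer_prod_mult_vector inner_diff_right
          scaleR_matrix_vector_assoc[symmetric] inner_commute[of ?u] power2_eq_square
          pos_divide_le_eq mult_ac)
  qed
  moreover have "sym_mat (X - ?c *\<^sub>R outer_prod ?u)"
    by (intro sym_mat_diff sym_mat_scaleR psd_sym_mat X psd_outer_prod)
  ultimately show ?thesis by (simp add: psd_def)
qed

lemma psd_rank_one_split:
  fixes X :: "real^'n^'n"
  assumes X: "psd X" and "X \<noteq> 0"
  obtains c u X' where "0 < c" "u \<noteq> 0" "psd X'" "X = X' + c *\<^sub>R outer_prod u"
    "dim (colspace X') < dim (colspace X)"
proof -
  obtain z where Xz: "X *v z \<noteq> 0" using \<open>X \<noteq> 0\<close> matrix_eq[of X 0] by auto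
  have "0 < z \<bullet> (X *v z)"
    using psd_quadratic_nonneg[OF X, of z] psd_quadratic_zero_imp_kernel[OF X, of z] Xz by linarith
  define u c where "u = X *v z" and "c = 1 / (z \<bullet> (X *v z))"
  define X' where "X' = X - c *\<^sub>R outer_prod u"
  have "0 < c" and "psd X'"
    using \<open>0 < z \<bullet> (X *v z)\<close> psd_diff_outer_prod[OF X] by (simp_all add: c_def X'_def u_def)
  have X'_mult: "X' *v w = X *v w - (c * (u \<bullet> w)) *\<^sub>R u" for w
    by (simp add: X'_def matrix_vector_mult_diff_rdistrib outer_prod_mult_vector
        scaleR_matrix_vector_assoc[symmetric])
  have "colspace X' \<subseteq> colspace X"
  proof
    fix x assume "x \<in> colspace X'"
    then obtain w where "x = X' *v w" by auto
    then have "x = X *v (w - (c * (u \<bullet> w)) *\<^sub>R z)"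
      by (simp add: X'_mult matrix_vector_mult_diff_distrib matrix_vector_mult_scaleR u_def)
    then show "x \<in> colspace X" by blast
  qed
  moreover have "u \<notin> colspace X'"
  proof
    assume "u \<in> colspace X'"
    then obtain w where w: "u = X' *v w" by auto
    have uz: "u \<bullet> z * c = 1" using \<open>0 < c\<close> by (simp add: u_def c_def inner_commute)
    then have "X' *v z = 0" by (simp add: X'_mult u_def mult.commute)
    then have "z \<bullet> u = 0"
      using sym_mat_inner_commute[OF psd_sym_mat[OF \<open>psd X'\<close>], of z w] w by simp
    then show False using uz by (simp add: inner_commute)
  qed
  moreover have "u \<in> colspace X" by (simp add: u_def)
  ultimately have "dim (colspace X') < dim (colspace X)"
    using dim_psubset[of "colspace X'" "colspace X"] by (auto simp: span_colspace)
  moreover have "X = X' + c *\<^sub>R outer_prod u" by (simp add: X'_def)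
  ultimately show ?thesis
    using that[of c u X'] \<open>0 < c\<close> Xz \<open>psd X'\<close> unfolding u_def by blast
qed

lemma trip_psd_nonneg:
  assumes S: "psd S" and X: "psd (X::real^'n^'n)"
  shows "0 \<le> trip S X"
  using X
proof (induct "dim (colspace X)" arbitrary: X rule: less_induct)
  case less
  show ?case
  proof (cases "X = 0")
    case False
    then obtain c u X' where "0 < c" "psd X'" "X = X' + c *\<^sub>R outer_prod u"
      and "dim (colspace X') < dim (colspace X)"
      using psd_rank_one_split[OF \<open>psd X\<close>] by metis
    then show ?thesis
      using less psd_quadratic_nonneg[OF S, of u]
      by (simp add: trip_add_right trip_scaleR_right trip_outer_prod)
  qed simp
qed

lemma trip_pd_pos:
  assumes S: "pd S" and X: "psd X" and "X \<noteq> 0"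
  shows "0 < trip S X"
proof -
  obtain c u X' where "0 < c" "u \<noteq> 0" "psd X'" "X = X' + c *\<^sub>R outer_prod u"
    using psd_rank_one_split[OF X \<open>X \<noteq> 0\<close>] by metis
  moreover have "0 \<le> trip S X'" using trip_psd_nonneg[OF pd_imp_psd[OF S] \<open>psd X'\<close>] .
  moreover have "0 < u \<bullet> (S *v u)" using S \<open>u \<noteq> 0\<close> by (simp add: pd_def)
  ultimately show ?thesis
    by (simp add: trip_add_right trip_scaleR_right trip_outer_prod add_nonneg_pos)
qed

text \<open>If \<open>x\<^sup>TSx < 0\<close>, then \<open>\<langle>S, t xx\<^sup>T\<rangle> \<rightarrow> -\<infinity>\<close> as \<open>t \<rightarrow> \<infinity>\<close>.\<close>
lemma psd_if_trip_bounded_below: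
  assumes "sym_mat S" and bounded: "\<And>X. psd X \<Longrightarrow> l \<le> trip S X"
  shows "psd S"
proof -
  have "0 \<le> x \<bullet> (S *v x)" for x
  proof (rule ccontr)
    assume neg: "\<not> 0 \<le> x \<bullet> (S *v x)"
    define t where "t = (\<bar>l\<bar> + 1) / - (x \<bullet> (S *v x))"
    have "0 \<le> t" unfolding t_def using neg by (intro divide_nonneg_pos) auto
    then have "l \<le> t * (x \<bullet> (S *v x))"
      using bounded[OF psd_scaleR[OF psd_outer_prod]]
      by (simp add: trip_scaleR_right trip_outer_prod)
    also have "\<dots> = - (\<bar>l\<bar> + 1)" using neg by (simp add: t_def)
    finally show False by simp
  qed
  with \<open>sym_mat S\<close> show ?thesis by (simp add: psd_def)
qed

lemma sym_mat_zero_if_trip_minimized_at_pd: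
  assumes "sym_mat M" and "pd X0" and min: "\<And>X. psd X \<Longrightarrow> trip M X0 \<le> trip M X"
  shows "M = 0"
proof -
  have "trip M X0 \<le> 0" using min[OF psd_zero] by simp
  moreover have "trip M X0 \<le> trip M (2 *\<^sub>R X0)"
    using min psd_scaleR[OF pd_imp_psd[OF \<open>pd X0\<close>]] by simp
  ultimately have "trip M X0 = 0" by (simp add: trip_scaleR_right)
  then have "psd M" using psd_if_trip_bounded_below[OF \<open>sym_mat M\<close>, of 0] min by simp
  show ?thesis
  proof (rule ccontr)
    assume "M \<noteq> 0"
    then have "0 < trip X0 M" using trip_pd_pos[OF \<open>pd X0\<close> \<open>psd M\<close>] by simp
    then show False using \<open>trip M X0 = 0\<close> trip_commute[of M X0] by simp
  qed
qed

section \<open>Duality\<close>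

lemma weak_duality:
  assumes X: "primal_feas A b X" and yS: "dual_feas C Cb A eps (y, S)"
  shows "b \<bullet> y \<le> trip (C + eps *\<^sub>R Cb) X"
proof -
  have "C + eps *\<^sub>R Cb = (\<Sum>i\<in>UNIV. y $ i *\<^sub>R A i) + S"
    using yS by (simp add: dual_feas_def)
  then have "trip (C + eps *\<^sub>R Cb) X = (\<Sum>i\<in>UNIV. y $ i * trip (A i) X) + trip S X"
    by (simp add: trip_add_left trip_sum_scaleR_left)
  also have "(\<Sum>i\<in>UNIV. y $ i * trip (A i) X) = b \<bullet> y"
    using X by (simp add: primal_feas_def inner_vec_def mult.commute)
  finally show ?thesis
    using trip_psd_nonneg[of S X] X yS by (simp add: dual_feas_def primal_feas_def)
qed

lemma nonneg_if_bounds_negatives: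
  fixes \<mu> \<beta> :: real
  assumes bound: "\<And>w. w < 0 \<Longrightarrow> \<mu> * w \<le> \<beta>"
  shows "0 \<le> \<mu>" "0 \<le> \<beta>"
proof -
  show "0 \<le> \<mu>"
  proof (rule ccontr)
    assume "\<not> 0 \<le> \<mu>"
    then show False using bound[of "(\<bar>\<beta>\<bar> + 1) / \<mu>"] by (simp add: divide_pos_neg)
  qed
  show "0 \<le> \<beta>"
  proof (rule ccontr)
    assume "\<not> 0 \<le> \<beta>"
    then have "\<mu> * (\<beta> / (\<mu> + 1)) \<le> \<beta>"
      using \<open>0 \<le> \<mu>\<close> by (intro bound) (simp add: divide_neg_pos)
    then have "\<mu> * \<beta> \<le> \<beta> * (\<mu> + 1)"
      using \<open>0 \<le> \<mu>\<close> by (simp add: divide_le_eq mult.commute)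
    then show False using \<open>\<not> 0 \<le> \<beta>\<close> by (simp add: algebra_simps)
  qed
qed

text \<open>Separate \<open>{0} \<times> (-\<infinity>, 0)\<close> from the image of the semidefinite cone under
  \<open>X \<mapsto> (\<A>X - b, \<langle>C + \<epsilon>C\<^sub>b, X\<rangle> - v)\<close>; the two are disjoint because \<open>X\<^sub>o\<close> is optimal.\<close>
lemma primal_optimal_separation:
  fixes A :: "'m::finite \<Rightarrow> real^'n^'n" and b :: "real^'m"
  assumes Xo: "Xo \<in> Popt C Cb A b eps"
  obtains l :: "real^'m" and \<mu> :: real where "(l, \<mu>) \<noteq> 0" "0 \<le> \<mu>"
    "\<And>X. psd X \<Longrightarrow> l \<bullet> b \<le> trip (\<Sum>i\<in>UNIV. (l $ i) *\<^sub>R A i) X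
        + \<mu> * (trip (C + eps *\<^sub>R Cb) X - trip (C + eps *\<^sub>R Cb) Xo)"
proof -
  define Ce where "Ce = C + eps *\<^sub>R Cb"
  define v where "v = trip Ce Xo"
  define L where "L = (\<lambda>X. ((\<chi> i. trip (A i) X) :: real^'m, trip Ce X))"
  define W where "W = (\<lambda>p. p - (b, v)) ` L ` {X. psd X}"
  define Z where "Z = {0::real^'m} \<times> {w::real. w < 0}"
  have "linear L"
    by (rule linearI) (simp_all add: L_def vec_eq_iff trip_add_right trip_scaleR_right)
  moreover have "convex {X::real^'n^'n. psd X}"
    unfolding convex_def by (auto intro!: psd_add psd_scaleR)
  ultimately have "convex W"
    unfolding W_def by (intro convex_translation_subtract convex_linear_image)
  moreover have "convex Z"
    unfolding Z_def using convex_halfspace_lt[of "1::real" 0] by (intro convex_Times) auto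
  moreover have "Z \<inter> W = {}"
  proof -
    have False if "psd X" "b = (\<chi> i. trip (A i) X)" "trip Ce X < v" for X
      using Xo that by (auto simp: Popt_def primal_feas_def vec_eq_iff Ce_def v_def)
    then show ?thesis by (force simp: Z_def W_def L_def)
  qed
  moreover have "Z \<noteq> {}" by (auto simp: Z_def intro: exI[of _ "-1"])
  moreover have "W \<noteq> {}" using psd_zero by (auto simp: W_def)
  ultimately obtain a \<beta> where "a \<noteq> 0" and aZ: "\<forall>x\<in>Z. a \<bullet> x \<le> \<beta>" and aW: "\<forall>x\<in>W. a \<bullet> x \<ge> \<beta>"
    using separating_hyperplane_sets[of Z W] by blast
  obtain l \<mu> where a: "a = (l, \<mu>)" by fastforce
  have "0 \<le> \<mu>" "0 \<le> \<beta>"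
    using nonneg_if_bounds_negatives[of \<mu> \<beta>] aZ by (auto simp: Z_def a)
  have "l \<bullet> b \<le> trip (\<Sum>i\<in>UNIV. (l $ i) *\<^sub>R A i) X + \<mu> * (trip Ce X - v)"
    if "psd X" for X
  proof -
    have "\<beta> \<le> l \<bullet> ((\<chi> i. trip (A i) X) - b) + \<mu> * (trip Ce X - v)"
      using aW that by (auto simp: W_def L_def a)
    then show ?thesis using \<open>0 \<le> \<beta>\<close>
      by (simp add: trip_sum_scaleR_left inner_vec_def right_diff_distrib sum_subtractf)
  qed
  then show ?thesis
    using that[of l \<mu>] \<open>a \<noteq> 0\<close> \<open>0 \<le> \<mu>\<close> unfolding a Ce_def v_def by blast
qed

locale primal_slater_sdp =
  fixes C Cb :: "real^'n^'n" and A :: "'m::finite \<Rightarrow> real^'n^'n" and b :: "real^'m"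
  assumes sym_C: "sym_mat C" and sym_Cb: "sym_mat Cb" and sym_A: "\<And>i. sym_mat (A i)"
    and lin_indep: "\<And>c :: real^'m. (\<Sum>i\<in>UNIV. (c $ i) *\<^sub>R A i) = 0 \<Longrightarrow> c = 0"
    and strictly_feasible: "\<exists>X. pd X \<and> (\<forall>i. trip (A i) X = b $ i)"
begin

lemma dual_solution_of_separation:
  assumes "0 < \<mu>" and sep: "\<And>X. psd X \<Longrightarrow>
      l \<bullet> b \<le> trip (\<Sum>i\<in>UNIV. (l $ i) *\<^sub>R A i) X
        + \<mu> * (trip (C + eps *\<^sub>R Cb) X - trip (C + eps *\<^sub>R Cb) Xo)"
  defines "y \<equiv> (- 1 / \<mu>) *\<^sub>R l"
    and "S \<equiv> C + eps *\<^sub>R Cb + (1 / \<mu>) *\<^sub>R (\<Sum>i\<in>UNIV. (l $ i) *\<^sub>R A i)"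
  shows "dual_feas C Cb A eps (y, S)" and "trip (C + eps *\<^sub>R Cb) Xo \<le> b \<bullet> y"
proof -
  let ?Ce = "C + eps *\<^sub>R Cb" and ?M = "\<Sum>i\<in>UNIV. (l $ i) *\<^sub>R A i"
  have bound: "trip ?Ce Xo - b \<bullet> y \<le> trip S X" if "psd X" for X
  proof -
    have "(1 / \<mu>) * (l \<bullet> b) \<le> (1 / \<mu>) * (trip ?M X + \<mu> * (trip ?Ce X - trip ?Ce Xo))"
      using mult_left_mono[OF sep[OF that], of "1 / \<mu>"] \<open>0 < \<mu>\<close> by simp
    then show ?thesis
      using \<open>0 < \<mu>\<close> by (simp add: S_def y_def trip_add_left trip_scaleR_left inner_commute
          algebra_simps)
  qed
  have "sym_mat S"
    unfolding S_def by (intro sym_mat_add sym_mat_scaleR sym_C sym_Cb sym_mat_sum_scaleR sym_A)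
  then have "psd S" using psd_if_trip_bounded_below bound by blast
  moreover have "(\<Sum>i\<in>UNIV. (y $ i) *\<^sub>R A i) = - (1 / \<mu>) *\<^sub>R ?M"
    by (simp add: y_def scaleR_sum_right)
  ultimately show "dual_feas C Cb A eps (y, S)" by (simp add: dual_feas_def S_def)
  show "trip ?Ce Xo \<le> b \<bullet> y" using bound[OF psd_zero] by simp
qed

text \<open>The multiplier \<open>\<mu>\<close> of the objective cannot vanish: otherwise \<open>\<Sum> l\<^sub>i A\<^sub>i\<close> would attain its
  minimum over the semidefinite cone at the positive definite feasible point, forcing \<open>l = 0\<close>.\<close>
lemma strong_duality:
  assumes Xo: "Xo \<in> Popt C Cb A b eps"
  shows "\<exists>y S. dual_feas C Cb A eps (y, S) \<and> trip (C + eps *\<^sub>R Cb) Xo \<le> b \<bullet> y"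
proof -
  let ?Ce = "C + eps *\<^sub>R Cb"
  obtain l \<mu> where "(l, \<mu>) \<noteq> 0" "0 \<le> \<mu>" and sep: "\<And>X. psd X \<Longrightarrow>
      l \<bullet> b \<le> trip (\<Sum>i\<in>UNIV. (l $ i) *\<^sub>R A i) X + \<mu> * (trip ?Ce X - trip ?Ce Xo)"
    using primal_optimal_separation[OF Xo] by blast
  define M where "M = (\<Sum>i\<in>UNIV. (l $ i) *\<^sub>R A i)"
  have "\<mu> \<noteq> 0"
  proof
    assume "\<mu> = 0"
    obtain X0 where "pd X0" and X0: "\<And>i. trip (A i) X0 = b $ i" using strictly_feasible by blast
    have "trip M X0 = l \<bullet> b" by (simp add: M_def trip_sum_scaleR_left X0 inner_vec_def mult.commute)
    then have "M = 0"
      using sym_mat_zero_if_trip_minimized_at_pd[OF _ \<open>pd X0\<close>] sep \<open>\<mu> = 0\<close> sym_A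
      by (simp add: M_def sym_mat_sum_scaleR)
    then show False
      using lin_indep[of l] \<open>(l, \<mu>) \<noteq> 0\<close> \<open>\<mu> = 0\<close> by (simp add: M_def zero_prod_def)
  qed
  with \<open>0 \<le> \<mu>\<close> have "0 < \<mu>" by simp
  then show ?thesis using dual_solution_of_separation[OF _ sep] by blast
qed

lemma dual_optimal_value_eq:
  assumes "Xo \<in> Popt C Cb A b eps" and "(y, S) \<in> Dopt C Cb A b eps"
  shows "b \<bullet> y = trip (C + eps *\<^sub>R Cb) Xo"
proof -
  obtain y' S' where "dual_feas C Cb A eps (y', S')" "trip (C + eps *\<^sub>R Cb) Xo \<le> b \<bullet> y'"
    using strong_duality[OF assms(1)] by blast
  then have "trip (C + eps *\<^sub>R Cb) Xo \<le> b \<bullet> y" using assms(2) by (force simp: Dopt_def)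
  moreover have "b \<bullet> y \<le> trip (C + eps *\<^sub>R Cb) Xo"
    using assms weak_duality[of A b Xo C Cb eps y S] by (simp add: Popt_def Dopt_def)
  ultimately show ?thesis by simp
qed

text \<open>Along a fixed primal solution that stays optimal, the optimal value is affine in \<open>\<epsilon>\<close>,
  whereas the dual objective of a convex combination is the same convex combination.\<close>
lemma Dopt_convex_combination:
  assumes Xo: "Xo \<in> Popt C Cb A b a" "Xo \<in> Popt C Cb A b c"
    and opt_a: "(ya, Sa) \<in> Dopt C Cb A b a" and opt_c: "(yc, Sc) \<in> Dopt C Cb A b c"
    and "0 \<le> t" "t \<le> 1" and e: "e = t * a + (1 - t) * c"
  shows "(t *\<^sub>R ya + (1 - t) *\<^sub>R yc, t *\<^sub>R Sa + (1 - t) *\<^sub>R Sc) \<in> Dopt C Cb A b e"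
proof -
  let ?y = "t *\<^sub>R ya + (1 - t) *\<^sub>R yc" and ?S = "t *\<^sub>R Sa + (1 - t) *\<^sub>R Sc"
  have feas_a: "(\<Sum>i\<in>UNIV. ya $ i *\<^sub>R A i) + Sa = C + a *\<^sub>R Cb" "psd Sa"
    and feas_c: "(\<Sum>i\<in>UNIV. yc $ i *\<^sub>R A i) + Sc = C + c *\<^sub>R Cb" "psd Sc"
    using opt_a opt_c by (simp_all add: Dopt_def dual_feas_def)
  have "(\<Sum>i\<in>UNIV. ?y $ i *\<^sub>R A i)
      = t *\<^sub>R (\<Sum>i\<in>UNIV. ya $ i *\<^sub>R A i) + (1 - t) *\<^sub>R (\<Sum>i\<in>UNIV. yc $ i *\<^sub>R A i)"
    by (simp add: scaleR_add_left sum.distrib scaleR_sum_right)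
  then have "(\<Sum>i\<in>UNIV. ?y $ i *\<^sub>R A i) + ?S
      = t *\<^sub>R ((\<Sum>i\<in>UNIV. ya $ i *\<^sub>R A i) + Sa) + (1 - t) *\<^sub>R ((\<Sum>i\<in>UNIV. yc $ i *\<^sub>R A i) + Sc)"
    by (simp add: scaleR_add_right algebra_simps)
  also have "\<dots> = C + e *\<^sub>R Cb" unfolding feas_a(1) feas_c(1) e by (simp add: algebra_simps)
  finally have "dual_feas C Cb A e (?y, ?S)"
    using feas_a feas_c \<open>0 \<le> t\<close> \<open>t \<le> 1\<close> by (simp add: dual_feas_def psd_add psd_scaleR)
  moreover have "b \<bullet> y' \<le> b \<bullet> ?y" if "dual_feas C Cb A e (y', S')" for y' S'
  proof -
    have "b \<bullet> y' \<le> trip (C + e *\<^sub>R Cb) Xo"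
      using weak_duality[OF _ that] Xo(1) by (simp add: Popt_def)
    also have "\<dots> = t * trip (C + a *\<^sub>R Cb) Xo + (1 - t) * trip (C + c *\<^sub>R Cb) Xo"
      unfolding trip_add_left trip_scaleR_left e by (simp add: algebra_simps)
    also have "\<dots> = b \<bullet> ?y"
      using dual_optimal_value_eq[OF Xo(1) opt_a] dual_optimal_value_eq[OF Xo(2) opt_c]
      by (simp add: inner_add_right)
    finally show ?thesis .
  qed
  ultimately show ?thesis by (force simp: Dopt_def)
qed

lemma colspace_dual_slack_subset:
  assumes Xo: "Xo \<in> Popt C Cb A b a" "Xo \<in> Popt C Cb A b c"
    and opt_a: "(ya, Sa) \<in> Dopt C Cb A b a" and opt_c: "(yc, Sc) \<in> Dopt C Cb A b c"
    and ri_e: "(ye, Se) \<in> rel_interior (Dopt C Cb A b e)" and "a < e" "e < c"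
  shows "colspace Sa \<subseteq> colspace Se" "colspace Sc \<subseteq> colspace Se"
proof -
  define t where "t = (c - e) / (c - a)"
  have "0 < t" "t < 1" using \<open>a < e\<close> \<open>e < c\<close> by (simp_all add: t_def)
  have "t * (c - a) = c - e" using \<open>a < e\<close> \<open>e < c\<close> by (simp add: t_def)
  then have "e = t * a + (1 - t) * c" by (simp add: algebra_simps)
  then have "(t *\<^sub>R ya + (1 - t) *\<^sub>R yc, t *\<^sub>R Sa + (1 - t) *\<^sub>R Sc) \<in> Dopt C Cb A b e"
    using Dopt_convex_combination[OF Xo opt_a opt_c] \<open>0 < t\<close> \<open>t < 1\<close> by simp
  from colspace_subset_rel_interior[OF linear_snd _ ri_e this]
  have "colspace (t *\<^sub>R Sa + (1 - t) *\<^sub>R Sc) \<subseteq> colspace Se"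
    by (simp add: Dopt_def dual_feas_def)
  moreover have "psd Sa" "psd Sc" using opt_a opt_c by (simp_all add: Dopt_def dual_feas_def)
  ultimately show "colspace Sa \<subseteq> colspace Se" "colspace Sc \<subseteq> colspace Se"
    using colspace_subset_psd_combination[of Sa Sc t "1 - t"]
      colspace_subset_psd_combination[of Sc Sa "1 - t" t] \<open>0 < t\<close> \<open>t < 1\<close>
    by (auto simp: add.commute)
qed

lemma colspace_dual_slack_const:
  assumes "a < c"
    and Xo: "\<And>e. e \<in> {a..c} \<Longrightarrow> Xo \<in> Popt C Cb A b e"
    and ri: "\<And>e. e \<in> {a..c} \<Longrightarrow> (ys e, Ss e) \<in> rel_interior (Dopt C Cb A b e)"
    and rank: "\<And>e. e \<in> {a..c} \<Longrightarrow> rank (Ss e) = rank (Ss a)"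
    and "e \<in> {a..c}"
  shows "colspace (Ss e) = colspace (Ss a)"
proof -
  have ends: "a \<in> {a..c}" "c \<in> {a..c}" using \<open>a < c\<close> by auto
  have opt: "(ys e, Ss e) \<in> Dopt C Cb A b e" if "e \<in> {a..c}" for e
    using ri[OF that] rel_interior_subset by blast
  have interior: "colspace (Ss e) = colspace (Ss a) \<and> colspace (Ss c) = colspace (Ss a)"
    if "a < e" "e < c" for e
  proof -
    have "e \<in> {a..c}" using that by simp
    from colspace_dual_slack_subset[OF Xo[OF ends(1)] Xo[OF ends(2)] opt[OF ends(1)]
        opt[OF ends(2)] ri[OF this] that]
    show ?thesis
      using colspace_eq_if_subset_rank_eq rank[OF ends(2)] rank[OF \<open>e \<in> {a..c}\<close>] by metis
  qed
  have right_end: "colspace (Ss c) = colspace (Ss a)"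
    using interior[of "(a + c) / 2"] \<open>a < c\<close> by simp
  consider "e = a" | "e = c" | "a < e" "e < c" using \<open>e \<in> {a..c}\<close> by fastforce
  then show ?thesis using right_end interior by cases simp_all
qed

end

theorem proposition4:
  fixes C Cb :: "real^'n^'n" and A :: "'m::finite \<Rightarrow> real^'n^'n" and b :: "real^'m"
    and eps1 eps2 :: real
    and Xs :: "real \<Rightarrow> real^'n^'n" and ys :: "real \<Rightarrow> real^'m" and Ss :: "real \<Rightarrow> real^'n^'n"
  assumes symC: "sym_mat C" and symCb: "sym_mat Cb" and symA: "\<And>i. sym_mat (A i)"
    and indep: "\<And>c :: real^'m. (\<Sum>i\<in>UNIV. (c $ i) *\<^sub>R A i) = 0 \<Longrightarrow> c = 0"
    and strict_primal: "\<exists>X. pd X \<and> (\<forall>i. trip (A i) X = b $ i)"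
    and strict_dual: "\<exists>y S. pd S \<and> (\<Sum>i\<in>UNIV. (y $ i) *\<^sub>R A i) + S = C"
    and lt: "eps1 < eps2"
    and sub: "{eps1..eps2} \<subseteq> interior (Eset C Cb A b)"
    and mc: "\<And>eps. eps \<in> {eps1..eps2} \<Longrightarrow> max_compl C Cb A b eps (Xs eps) (ys eps) (Ss eps)"
    and Pconst: "\<And>eps. eps \<in> {eps1..eps2} \<Longrightarrow> Popt C Cb A b eps = Popt C Cb A b eps1"
    and rkconst: "\<And>eps. eps \<in> {eps1..eps2} \<Longrightarrow> rank (Ss eps) = rank (Ss eps1)"
  shows "\<forall>eps\<in>{eps1..eps2}. opt_partition (Xs eps) (Ss eps) = opt_partition (Xs eps1) (Ss eps1)"
proof -
  \<comment> \<open>\<open>strict_dual\<close> and \<open>sub\<close> only guarantee that maximally complementary solutions exist,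
    which \<open>mc\<close> already provides.\<close>
  interpret primal_slater_sdp C Cb A b
    using symC symCb symA indep strict_primal by unfold_locales auto
  have ri_X: "Xs e \<in> rel_interior (Popt C Cb A b eps1)" if "e \<in> {eps1..eps2}" for e
    using mc[OF that] Pconst[OF that] by (simp add: max_compl_def)
  have Xo: "Xs eps1 \<in> Popt C Cb A b e" if "e \<in> {eps1..eps2}" for e
    using ri_X[of eps1] lt rel_interior_subset Pconst[OF that] by auto
  have ri_D: "(ys e, Ss e) \<in> rel_interior (Dopt C Cb A b e)" if "e \<in> {eps1..eps2}" for e
    using mc[OF that] by (simp add: max_compl_def)
  have colspace_X: "colspace (Xs e) = colspace (Xs eps1)" if "e \<in> {eps1..eps2}" for e
    using colspace_eq_rel_interior_psd[OF _ ri_X[OF that] ri_X[of eps1]] lt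
    by (simp add: Popt_def primal_feas_def)
  have colspace_S: "colspace (Ss e) = colspace (Ss eps1)" if "e \<in> {eps1..eps2}" for e
    by (rule colspace_dual_slack_const[OF lt Xo ri_D rkconst that])
  show ?thesis
  proof
    fix e assume e: "e \<in> {eps1..eps2}"
    show "opt_partition (Xs e) (Ss e) = opt_partition (Xs eps1) (Ss eps1)"
      unfolding opt_partition_def colspace_X[OF e] colspace_S[OF e] ..
  qed
qed

end
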